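(* Let $\mathcal{X}$ and $\mathcal{Y}$ be finite sets, let $\Pr$ be a probability distribution on $\mathcal{X}$, let $\delta:\mathcal{X}\times\mathcal{Y}\to\mathbb{R}$, and let $\bar\pi,\pi_1,\dots,\pi_m$ be stochastic policies, each $\pi_i$ having support for $\bar\pi$. Let $\mathcal{D}=\bigcup_{i=1}^m\mathcal{D}^i$ be a log dataset in which, for each $i$, $\mathcal{D}^i$ consists of $n_i$ samples $(x^i_j,y^i_j,\delta^i_j,p^i_j)$, $j=1,\dots,n_i$, with $x^i_j\sim\Pr$, $y^i_j\sim\pi_i(\cdot\mid x^i_j)$, $\delta^i_j=\delta(x^i_j,y^i_j)$, $p^i_j=\pi_i(y^i_j\mid x^i_j)$, all draws independent; let $n=\sum_in_i$ and $\pi_{avg}(y\mid x)=\frac1n\sum_in_i\pi_i(y\mid x)$. Define $$\hat U_{naive}(\bar\pi)=\frac1n\sum_{i=1}^m\sum_{j=1}^{n_i}\delta^i_j\frac{\bar\pi(y^i_j\mid x^i_j)}{p^i_j},\qquad \hat U_{bal}(\bar\pi)=\frac1n\sum_{i=1}^m\sum_{j=1}^{n_i}\delta^i_j\frac{\bar\pi(y^i_j\mid x^i_j)}{\pi_{avg}(y^i_j\mid x^i_j)}.$$ Then $\mathrm{Var}_{\mathcal{D}}[\hat U_{bal}(\bar\pi)]\le\mathrm{Var}_{\mathcal{D}}[\hat U_{naive}(\bar\pi)]$.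
   Context: A stochastic policy $\pi$ assigns to each $x\in\mathcal{X}$ a probability distribution $\pi(\cdot\mid x)$ on $\mathcal{Y}$. A policy $\pi$ has support for a policy $\pi'$ if for all $x\in\mathcal{X},y\in\mathcal{Y}$, $\delta(x,y)\pi'(y\mid x)\neq0$ implies $\pi(y\mid x)>0$. Variances are taken over the random draw of $\mathcal{D}$. *)

theory Defs
  imports "HOL-Probability.Probability"
begin

type_synonym ('x, 'y) policy = "'x \<Rightarrow> 'y pmf"

definition has_support ::
  "('x \<Rightarrow> 'y \<Rightarrow> real) \<Rightarrow> ('x, 'y) policy \<Rightarrow> ('x, 'y) policy \<Rightarrow> bool" where
  "has_support \<delta> \<pi> \<pi>' \<longleftrightarrow>
     (\<forall>x y. \<delta> x y * pmf (\<pi>' x) y \<noteq> 0 \<longrightarrow> pmf (\<pi> x) y > 0)"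

text \<open>One logged sample from policy pi: x ~ Pr, y ~ pi(.|x). (delta and p are
  deterministic functions of (x,y) and are recomputed in the estimators.)\<close>
definition sample_pmf :: "'x pmf \<Rightarrow> ('x, 'y) policy \<Rightarrow> ('x \<times> 'y) pmf" where
  "sample_pmf Pr \<pi> = bind_pmf Pr (\<lambda>x. map_pmf (\<lambda>y. (x, y)) (\<pi> x))"

text \<open>Index set of the log dataset: sample j (j < n_i) of logging policy i (i < m).\<close>
definition log_index :: "nat \<Rightarrow> (nat \<Rightarrow> nat) \<Rightarrow> (nat \<times> nat) set" where
  "log_index m ns = {(i, j). i < m \<and> j < ns i}"

definition log_dataset_pmf ::
  "'x pmf \<Rightarrow> nat \<Rightarrow> (nat \<Rightarrow> nat) \<Rightarrow> (nat \<Rightarrow> ('x, 'y) policy) \<Rightarrow> (nat \<times> nat \<Rightarrow> 'x \<times> 'y) pmf" where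
  "log_dataset_pmf Pr m ns \<pi> = Pi_pmf (log_index m ns) undefined (\<lambda>(i, j). sample_pmf Pr (\<pi> i))"

definition total_n :: "nat \<Rightarrow> (nat \<Rightarrow> nat) \<Rightarrow> nat" where
  "total_n m ns = (\<Sum>i<m. ns i)"

definition pi_avg :: "nat \<Rightarrow> (nat \<Rightarrow> nat) \<Rightarrow> (nat \<Rightarrow> ('x, 'y) policy) \<Rightarrow> 'x \<Rightarrow> 'y \<Rightarrow> real" where
  "pi_avg m ns \<pi> x y = (1 / real (total_n m ns)) * (\<Sum>i<m. real (ns i) * pmf (\<pi> i x) y)"

definition U_naive ::
  "nat \<Rightarrow> (nat \<Rightarrow> nat) \<Rightarrow> (nat \<Rightarrow> ('x, 'y) policy) \<Rightarrow> ('x \<Rightarrow> 'y \<Rightarrow> real) \<Rightarrow> ('x, 'y) policy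
   \<Rightarrow> (nat \<times> nat \<Rightarrow> 'x \<times> 'y) \<Rightarrow> real" where
  "U_naive m ns \<pi> \<delta> \<pi>b D = (1 / real (total_n m ns)) *
     (\<Sum>i<m. \<Sum>j<ns i. let (x, y) = D (i, j) in \<delta> x y * (pmf (\<pi>b x) y / pmf (\<pi> i x) y))"

definition U_bal ::
  "nat \<Rightarrow> (nat \<Rightarrow> nat) \<Rightarrow> (nat \<Rightarrow> ('x, 'y) policy) \<Rightarrow> ('x \<Rightarrow> 'y \<Rightarrow> real) \<Rightarrow> ('x, 'y) policy
   \<Rightarrow> (nat \<times> nat \<Rightarrow> 'x \<times> 'y) \<Rightarrow> real" where
  "U_bal m ns \<pi> \<delta> \<pi>b D = (1 / real (total_n m ns)) *
     (\<Sum>i<m. \<Sum>j<ns i. let (x, y) = D (i, j) in \<delta> x y * (pmf (\<pi>b x) y / pi_avg m ns \<pi> x y))"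

end

theory Submission
  imports Defs
begin

text \<open>Both estimators are averages of independent per-sample terms, so each variance is the
  \<open>n\<^sub>i\<close>-weighted sum of single-sample variances. Write \<open>c = \<delta> \<pi>b\<close>. The naive term
  \<open>c / \<pi>\<^sub>i\<close> has the true utility \<open>U\<close> as mean for every \<open>i\<close>, which gives
  \<open>\<Sum>\<^sub>z Pr c\<^sup>2 \<Sum>\<^sub>i n\<^sub>i / \<pi>\<^sub>i - n U\<^sup>2\<close>. The balanced term \<open>c / \<pi>\<^sub>a\<^sub>v\<^sub>g\<close> does not depend on \<open>i\<close>, so by
  Cauchy-Schwarz the weighted sum of its variances is at most \<open>n\<close> times its variance under the
  mixture \<open>\<pi>\<^sub>a\<^sub>v\<^sub>g\<close>, i.e. \<open>\<Sum>\<^sub>z Pr c\<^sup>2 n / \<pi>\<^sub>a\<^sub>v\<^sub>g - n U\<^sup>2\<close>. The remaining pointwise comparison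
  \<open>n / \<pi>\<^sub>a\<^sub>v\<^sub>g \<le> \<Sum>\<^sub>i n\<^sub>i / \<pi>\<^sub>i\<close> is the harmonic-arithmetic mean inequality.\<close>

lemma expectation_pair_pmf_mult:
  fixes f :: "'a \<Rightarrow> real" and g :: "'b \<Rightarrow> real"
  assumes "finite (set_pmf A)" "finite (set_pmf B)"
  shows "measure_pmf.expectation (pair_pmf A B) (\<lambda>z. f (fst z) * g (snd z))
       = measure_pmf.expectation A f * measure_pmf.expectation B g"
proof -
  have "measure_pmf.expectation (pair_pmf A B) (\<lambda>z. f (fst z) * g (snd z))
      = (\<Sum>a\<in>set_pmf A. \<Sum>b\<in>set_pmf B. pmf A a * pmf B b * (f a * g b))"
    using assms unfolding sum.cartesian_product
    by (subst integral_measure_pmf[of "set_pmf A \<times> set_pmf B"]) (auto intro!: sum.cong simp: pmf_pair)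
  also have "\<dots> = (\<Sum>a\<in>set_pmf A. pmf A a * f a) * (\<Sum>b\<in>set_pmf B. pmf B b * g b)"
    by (simp add: sum_product mult_ac)
  finally show ?thesis
    using assms by (simp add: integral_measure_pmf[of "set_pmf _"])
qed

lemma variance_pair_pmf_add:
  fixes f :: "'a \<Rightarrow> real" and g :: "'b \<Rightarrow> real"
  assumes "finite (set_pmf A)" "finite (set_pmf B)"
  shows "measure_pmf.variance (pair_pmf A B) (\<lambda>z. f (fst z) + g (snd z))
       = measure_pmf.variance A f + measure_pmf.variance B g"
proof -
  define f' where "f' a = f a - measure_pmf.expectation A f" for a
  define g' where "g' b = g b - measure_pmf.expectation B g" for b
  have int: "integrable (pair_pmf A B) h" for h :: "'a \<times> 'b \<Rightarrow> real"
    using assms by (intro integrable_measure_pmf_finite) simp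
  have mean: "measure_pmf.expectation (pair_pmf A B) (\<lambda>z. f (fst z) + g (snd z))
      = measure_pmf.expectation A f + measure_pmf.expectation B g"
    using int by simp
  have "measure_pmf.expectation A f' = 0" "measure_pmf.expectation B g' = 0"
    unfolding f'_def g'_def using assms
    by (subst Bochner_Integration.integral_diff; auto intro: integrable_measure_pmf_finite)+
  then have "measure_pmf.expectation (pair_pmf A B) (\<lambda>z. f' (fst z) * g' (snd z)) = 0"
    using assms by (simp add: expectation_pair_pmf_mult)
  moreover have "measure_pmf.variance (pair_pmf A B) (\<lambda>z. f (fst z) + g (snd z))
      = measure_pmf.expectation (pair_pmf A B)
          (\<lambda>z. (f' (fst z))\<^sup>2 + (g' (snd z))\<^sup>2 + 2 * (f' (fst z) * g' (snd z)))"
    unfolding mean f'_def g'_def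
    by (rule Bochner_Integration.integral_cong) (simp_all add: power2_eq_square algebra_simps)
  moreover have "measure_pmf.expectation (pair_pmf A B) (\<lambda>z. (f' (fst z))\<^sup>2) = measure_pmf.variance A f"
    using expectation_pair_pmf_fst[where f="\<lambda>a. (f' a)\<^sup>2"] by (simp add: f'_def)
  moreover have "measure_pmf.expectation (pair_pmf A B) (\<lambda>z. (g' (snd z))\<^sup>2) = measure_pmf.variance B g"
    using expectation_pair_pmf_snd[where f="\<lambda>b. (g' b)\<^sup>2"] by (simp add: g'_def)
  ultimately show ?thesis
    using int by simp
qed

lemma variance_pmf_scale:
  fixes f :: "'a \<Rightarrow> real"
  shows "measure_pmf.variance M (\<lambda>x. c * f x) = c\<^sup>2 * measure_pmf.variance M f"
  by (simp flip: right_diff_distrib add: power_mult_distrib)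

lemma variance_Pi_pmf_sum:
  fixes g :: "'i \<Rightarrow> 'b \<Rightarrow> real"
  assumes "finite I" "\<And>a. a \<in> I \<Longrightarrow> finite (set_pmf (p a))"
  shows "measure_pmf.variance (Pi_pmf I d p) (\<lambda>D. \<Sum>a\<in>I. g a (D a))
       = (\<Sum>a\<in>I. measure_pmf.variance (p a) (g a))"
  using assms
proof (induction I rule: finite_induct)
  case empty
  then show ?case by simp
next
  case (insert x A)
  have fin: "finite (set_pmf (Pi_pmf A d p))"
    using insert by (auto simp: set_Pi_pmf)
  have "(\<Sum>a\<in>insert x A. g a ((D(x := y)) a)) = g x y + (\<Sum>a\<in>A. g a (D a))" for y D
    using insert.hyps by (auto intro!: sum.cong)
  then have "measure_pmf.variance (Pi_pmf (insert x A) d p) (\<lambda>D. \<Sum>a\<in>insert x A. g a (D a))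
      = measure_pmf.variance (pair_pmf (p x) (Pi_pmf A d p)) (\<lambda>z. g x (fst z) + (\<Sum>a\<in>A. g a (snd z a)))"
    using insert.hyps by (simp add: Pi_pmf_insert case_prod_beta)
  also have "\<dots> = measure_pmf.variance (p x) (g x)
      + measure_pmf.variance (Pi_pmf A d p) (\<lambda>D. \<Sum>a\<in>A. g a (D a))"
    using insert.prems fin by (intro variance_pair_pmf_add) auto
  also have "\<dots> = (\<Sum>a\<in>insert x A. measure_pmf.variance (p a) (g a))"
    using insert by simp
  finally show ?case .
qed

lemma pmf_sample_pmf: "pmf (sample_pmf Pr \<pi>) (x, y) = pmf Pr x * pmf (\<pi> x) y"
proof -
  have "pmf (map_pmf (Pair a) (\<pi> a)) (x, y) = (if a = x then pmf (\<pi> x) y else 0)" for a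
    by (cases "a = x") (auto simp: pmf_map_inj'[of "Pair x"] inj_def intro!: pmf_map_outside)
  then show ?thesis
    unfolding sample_pmf_def pmf_bind
    by (subst integral_measure_pmf_real[where A="{x}"]) (auto split: if_splits)
qed

definition weighted_variance :: "('a::finite \<Rightarrow> real) \<Rightarrow> ('a \<Rightarrow> real) \<Rightarrow> real" where
  "weighted_variance q f = (\<Sum>z\<in>UNIV. q z * (f z)\<^sup>2) - (\<Sum>z\<in>UNIV. q z * f z)\<^sup>2"

lemma variance_pmf_finite:
  fixes M :: "'a::finite pmf" and f :: "'a \<Rightarrow> real"
  shows "measure_pmf.variance M f = weighted_variance (pmf M) f"
  by (subst measure_pmf.variance_eq)
    (auto intro!: integrable_measure_pmf_finite simp: integral_measure_pmf[of UNIV] weighted_variance_def)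

lemma variance_log_dataset_pmf:
  fixes g :: "nat \<Rightarrow> 'x::finite \<times> 'y::finite \<Rightarrow> real"
  shows "measure_pmf.variance (log_dataset_pmf Pr m ns \<pi>) (\<lambda>D. \<Sum>i<m. \<Sum>j<ns i. g i (D (i, j)))
       = (\<Sum>i<m. real (ns i) * measure_pmf.variance (sample_pmf Pr (\<pi> i)) (g i))"
proof -
  have index: "log_index m ns = Sigma {..<m} (\<lambda>i. {..<ns i})"
    by (auto simp: log_index_def)
  have "measure_pmf.variance (log_dataset_pmf Pr m ns \<pi>) (\<lambda>D. \<Sum>i<m. \<Sum>j<ns i. g i (D (i, j)))
      = measure_pmf.variance (Pi_pmf (log_index m ns) undefined (\<lambda>a. sample_pmf Pr (\<pi> (fst a))))
          (\<lambda>D. \<Sum>a\<in>log_index m ns. g (fst a) (D a))"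
    by (simp add: log_dataset_pmf_def index sum.Sigma case_prod_beta')
  also have "\<dots> = (\<Sum>a\<in>log_index m ns. measure_pmf.variance (sample_pmf Pr (\<pi> (fst a))) (g (fst a)))"
    by (rule variance_Pi_pmf_sum) (simp_all add: index)
  also have "\<dots> = (\<Sum>i<m. \<Sum>j<ns i. measure_pmf.variance (sample_pmf Pr (\<pi> i)) (g i))"
    unfolding index by (subst sum.Sigma) (auto simp: split_def)
  finally show ?thesis
    by simp
qed

lemma weighted_Cauchy_Schwarz_sum:
  fixes u e :: "'i \<Rightarrow> real"
  assumes "\<And>i. i \<in> I \<Longrightarrow> 0 \<le> u i"
  shows "(\<Sum>i\<in>I. u i * e i)\<^sup>2 \<le> (\<Sum>i\<in>I. u i) * (\<Sum>i\<in>I. u i * (e i)\<^sup>2)"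
proof -
  have "(\<Sum>i\<in>I. u i * e i) = (\<Sum>i\<in>I. sqrt (u i) * (sqrt (u i) * e i))"
    using assms by (intro sum.cong) (simp_all flip: mult.assoc)
  also have "(\<dots>)\<^sup>2 \<le> (\<Sum>i\<in>I. (sqrt (u i))\<^sup>2) * (\<Sum>i\<in>I. (sqrt (u i) * e i)\<^sup>2)"
    by (rule Cauchy_Schwarz_ineq_sum)
  also have "\<dots> = (\<Sum>i\<in>I. u i) * (\<Sum>i\<in>I. u i * (e i)\<^sup>2)"
    using assms by (simp add: power_mult_distrib)
  finally show ?thesis .
qed

lemma weighted_harmonic_arithmetic_mean:
  fixes k p :: "'i \<Rightarrow> real"
  assumes "\<And>i. i \<in> I \<Longrightarrow> 0 \<le> k i" "\<And>i. i \<in> I \<Longrightarrow> 0 < p i"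
  shows "(\<Sum>i\<in>I. k i)\<^sup>2 / (\<Sum>i\<in>I. k i * p i) \<le> (\<Sum>i\<in>I. k i / p i)"
proof -
  have "(\<Sum>i\<in>I. k i)\<^sup>2 = (\<Sum>i\<in>I. k i / p i * p i)\<^sup>2"
    using assms by (intro arg_cong[where f="\<lambda>x. x\<^sup>2"] sum.cong) (auto simp: dual_order.strict_implies_not_eq)
  also have "\<dots> \<le> (\<Sum>i\<in>I. k i / p i) * (\<Sum>i\<in>I. k i / p i * (p i)\<^sup>2)"
    using assms by (intro weighted_Cauchy_Schwarz_sum) (simp add: less_imp_le)
  also have "(\<Sum>i\<in>I. k i / p i * (p i)\<^sup>2) = (\<Sum>i\<in>I. k i * p i)"
    using assms by (intro sum.cong) (auto simp: power2_eq_square)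
  finally have "(\<Sum>i\<in>I. k i)\<^sup>2 \<le> (\<Sum>i\<in>I. k i / p i) * (\<Sum>i\<in>I. k i * p i)" .
  moreover have "0 \<le> (\<Sum>i\<in>I. k i * p i)" "0 \<le> (\<Sum>i\<in>I. k i / p i)"
    using assms by (auto intro!: sum_nonneg simp: less_imp_le)
  ultimately show ?thesis
    by (cases "(\<Sum>i\<in>I. k i * p i) = 0") (simp_all add: divide_le_eq)
qed

lemma sum_weighted_eq_0:
  fixes k f :: "'i \<Rightarrow> real"
  assumes "\<And>i. i \<in> I \<Longrightarrow> 0 \<le> k i" "(\<Sum>i\<in>I. k i) = 0"
  shows "(\<Sum>i\<in>I. k i * f i) = 0"
  using assms by (cases "finite I") (simp_all add: sum_nonneg_eq_0_iff)

lemma weighted_variance_mixture_le: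
  fixes q :: "'i \<Rightarrow> 'z::finite \<Rightarrow> real" and k :: "'i \<Rightarrow> real" and h :: "'z \<Rightarrow> real"
  assumes k: "\<And>i. i \<in> I \<Longrightarrow> 0 \<le> k i"
  shows "(\<Sum>i\<in>I. k i * weighted_variance (q i) h)
       \<le> (\<Sum>i\<in>I. k i) * weighted_variance (\<lambda>z. (\<Sum>i\<in>I. k i * q i z) / (\<Sum>i\<in>I. k i)) h"
proof (cases "(\<Sum>i\<in>I. k i) = 0")
  case True
  then show ?thesis
    using k by (simp add: sum_weighted_eq_0)
next
  case False
  define K where "K = (\<Sum>i\<in>I. k i)"
  define E where "E i = (\<Sum>z\<in>UNIV. q i z * h z)" for i
  have "0 < K"
    using False k unfolding K_def by (simp add: order_less_le sum_nonneg)
  have second_moment: "(\<Sum>i\<in>I. k i * (\<Sum>z\<in>UNIV. q i z * (h z)\<^sup>2))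
      = (\<Sum>z\<in>UNIV. (\<Sum>i\<in>I. k i * q i z) * (h z)\<^sup>2)"
    by (simp add: sum_distrib_left sum_distrib_right sum.swap[of _ I] mult_ac)
  have mean: "(\<Sum>i\<in>I. k i * E i) = (\<Sum>z\<in>UNIV. (\<Sum>i\<in>I. k i * q i z) * h z)"
    by (simp add: E_def sum_distrib_left sum_distrib_right sum.swap[of _ I] mult_ac)
  have "(\<Sum>i\<in>I. k i * E i)\<^sup>2 \<le> K * (\<Sum>i\<in>I. k i * (E i)\<^sup>2)"
    unfolding K_def using k by (rule weighted_Cauchy_Schwarz_sum)
  then have "(\<Sum>i\<in>I. k i * E i)\<^sup>2 / K \<le> (\<Sum>i\<in>I. k i * (E i)\<^sup>2)"
    using \<open>0 < K\<close> by (simp add: divide_le_eq mult.commute)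
  moreover have "(\<Sum>i\<in>I. k i * weighted_variance (q i) h)
      = (\<Sum>z\<in>UNIV. (\<Sum>i\<in>I. k i * q i z) * (h z)\<^sup>2) - (\<Sum>i\<in>I. k i * (E i)\<^sup>2)"
    by (simp add: weighted_variance_def E_def right_diff_distrib sum_subtractf second_moment)
  moreover have "K * weighted_variance (\<lambda>z. (\<Sum>i\<in>I. k i * q i z) / K) h
      = (\<Sum>z\<in>UNIV. (\<Sum>i\<in>I. k i * q i z) * (h z)\<^sup>2) - (\<Sum>i\<in>I. k i * E i)\<^sup>2 / K"
    using \<open>0 < K\<close> unfolding mean weighted_variance_def
    by (simp add: sum_divide_distrib[symmetric] right_diff_distrib power2_eq_square)
  ultimately show ?thesis
    unfolding K_def by linarith
qed

lemma weighted_variance_importance_weight: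
  fixes w c p :: "'z::finite \<Rightarrow> real"
  assumes "\<And>z. c z \<noteq> 0 \<Longrightarrow> 0 < p z"
  shows "weighted_variance (\<lambda>z. w z * p z) (\<lambda>z. c z / p z)
       = (\<Sum>z\<in>UNIV. w z * (c z)\<^sup>2 / p z) - (\<Sum>z\<in>UNIV. w z * c z)\<^sup>2"
proof -
  have "w z * p z * (c z / p z)\<^sup>2 = w z * (c z)\<^sup>2 / p z" "w z * p z * (c z / p z) = w z * c z" for z
    using assms[of z] by (cases "c z = 0"; simp add: power2_eq_square)+
  then show ?thesis
    by (simp add: weighted_variance_def)
qed

lemma sum_weighted_variance_importance_weight:
  fixes w c :: "'z::finite \<Rightarrow> real" and p :: "'i \<Rightarrow> 'z \<Rightarrow> real" and k :: "'i \<Rightarrow> real"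
  assumes "\<And>i z. i \<in> I \<Longrightarrow> c z \<noteq> 0 \<Longrightarrow> 0 < p i z"
  shows "(\<Sum>i\<in>I. k i * weighted_variance (\<lambda>z. w z * p i z) (\<lambda>z. c z / p i z))
       = (\<Sum>z\<in>UNIV. w z * (c z)\<^sup>2 * (\<Sum>i\<in>I. k i / p i z)) - (\<Sum>i\<in>I. k i) * (\<Sum>z\<in>UNIV. w z * c z)\<^sup>2"
  using assms
  by (simp add: weighted_variance_importance_weight right_diff_distrib sum_subtractf
      sum_distrib_left sum_distrib_right sum.swap[of _ I] mult_ac)

lemma sum_weighted_variance_mixture_importance_le:
  fixes w c pavg :: "'z::finite \<Rightarrow> real" and p :: "'i \<Rightarrow> 'z \<Rightarrow> real" and k :: "'i \<Rightarrow> real"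
  assumes k: "\<And>i. i \<in> I \<Longrightarrow> 0 \<le> k i"
    and pavg: "\<And>z. pavg z = (\<Sum>i\<in>I. k i * p i z) / (\<Sum>i\<in>I. k i)"
    and pavg_pos: "\<And>z. c z \<noteq> 0 \<Longrightarrow> 0 < pavg z"
  shows "(\<Sum>i\<in>I. k i * weighted_variance (\<lambda>z. w z * p i z) (\<lambda>z. c z / pavg z))
       \<le> (\<Sum>z\<in>UNIV. w z * (c z)\<^sup>2 * ((\<Sum>i\<in>I. k i) / pavg z)) - (\<Sum>i\<in>I. k i) * (\<Sum>z\<in>UNIV. w z * c z)\<^sup>2"
proof -
  define K where "K = (\<Sum>i\<in>I. k i)"
  have mixture: "(\<lambda>z. (\<Sum>i\<in>I. k i * (w z * p i z)) / K) = (\<lambda>z. w z * pavg z)"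
    by (simp add: pavg K_def sum_distrib_left mult_ac)
  have "(\<Sum>i\<in>I. k i * weighted_variance (\<lambda>z. w z * p i z) (\<lambda>z. c z / pavg z))
      \<le> K * weighted_variance (\<lambda>z. w z * pavg z) (\<lambda>z. c z / pavg z)"
    using weighted_variance_mixture_le[of I k "\<lambda>i z. w z * p i z"] k
    unfolding K_def[symmetric] mixture by simp
  also have "\<dots> = (\<Sum>z\<in>UNIV. w z * (c z)\<^sup>2 * (K / pavg z)) - K * (\<Sum>z\<in>UNIV. w z * c z)\<^sup>2"
    using weighted_variance_importance_weight[of c pavg w, OF pavg_pos]
    by (simp add: right_diff_distrib sum_distrib_left mult_ac)
  finally show ?thesis
    unfolding K_def .
qed

lemma balanced_importance_variance_le:
  fixes w c pavg :: "'z::finite \<Rightarrow> real" and p :: "'i \<Rightarrow> 'z \<Rightarrow> real" and k :: "'i \<Rightarrow> real"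
  assumes w: "\<And>z. 0 \<le> w z" and k: "\<And>i. i \<in> I \<Longrightarrow> 0 \<le> k i"
    and supp: "\<And>i z. i \<in> I \<Longrightarrow> c z \<noteq> 0 \<Longrightarrow> 0 < p i z"
    and pavg: "\<And>z. pavg z = (\<Sum>i\<in>I. k i * p i z) / (\<Sum>i\<in>I. k i)"
  shows "(\<Sum>i\<in>I. k i * weighted_variance (\<lambda>z. w z * p i z) (\<lambda>z. c z / pavg z))
       \<le> (\<Sum>i\<in>I. k i * weighted_variance (\<lambda>z. w z * p i z) (\<lambda>z. c z / p i z))"
proof (cases "(\<Sum>i\<in>I. k i) = 0")
  case True
  then show ?thesis
    using k by (simp add: sum_weighted_eq_0)
next
  case False
  define K where "K = (\<Sum>i\<in>I. k i)"
  obtain i0 where "i0 \<in> I" "0 < k i0"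
    using False k by (metis order_less_le sum.neutral)
  have "0 < K" "finite I"
    using False k unfolding K_def by (auto simp: order_less_le sum_nonneg intro: sum.infinite)
  have pavg_pos: "0 < pavg z" if "c z \<noteq> 0" for z
  proof -
    have "0 < (\<Sum>i\<in>I. k i * p i z)"
      using \<open>finite I\<close> \<open>i0 \<in> I\<close> \<open>0 < k i0\<close> k supp that
      by (intro sum_pos2[of I i0]) (auto intro!: mult_nonneg_nonneg simp: less_imp_le)
    then show ?thesis
      using \<open>0 < K\<close> by (simp add: pavg K_def[symmetric])
  qed
  have harmonic: "K / pavg z \<le> (\<Sum>i\<in>I. k i / p i z)" if "c z \<noteq> 0" for z
    using weighted_harmonic_arithmetic_mean[of I k "\<lambda>i. p i z"] k supp[OF _ that]
    by (simp add: pavg K_def power2_eq_square)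
  have pointwise: "w z * (c z)\<^sup>2 * (K / pavg z) \<le> w z * (c z)\<^sup>2 * (\<Sum>i\<in>I. k i / p i z)" for z
  proof (cases "c z = 0")
    case False
    then show ?thesis
      using w[of z] harmonic[of z] by (intro mult_left_mono) auto
  qed simp
  have "(\<Sum>i\<in>I. k i * weighted_variance (\<lambda>z. w z * p i z) (\<lambda>z. c z / pavg z))
      \<le> (\<Sum>z\<in>UNIV. w z * (c z)\<^sup>2 * (K / pavg z)) - K * (\<Sum>z\<in>UNIV. w z * c z)\<^sup>2"
    unfolding K_def by (rule sum_weighted_variance_mixture_importance_le[OF k pavg pavg_pos])
  also have "\<dots> \<le> (\<Sum>z\<in>UNIV. w z * (c z)\<^sup>2 * (\<Sum>i\<in>I. k i / p i z)) - K * (\<Sum>z\<in>UNIV. w z * c z)\<^sup>2"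
    using sum_mono[OF pointwise] by (rule diff_right_mono)
  also have "\<dots> = (\<Sum>i\<in>I. k i * weighted_variance (\<lambda>z. w z * p i z) (\<lambda>z. c z / p i z))"
    unfolding K_def by (rule sum_weighted_variance_importance_weight[symmetric, OF supp])
  finally show ?thesis .
qed

theorem theorem5p3:
  fixes Pr :: "'x::finite pmf"
    and \<delta> :: "'x \<Rightarrow> 'y::finite \<Rightarrow> real"
    and \<pi>b :: "('x, 'y) policy"
    and \<pi> :: "nat \<Rightarrow> ('x, 'y) policy"
    and m :: nat and ns :: "nat \<Rightarrow> nat"
  assumes "\<forall>i<m. has_support \<delta> (\<pi> i) \<pi>b"
  shows "measure_pmf.variance (log_dataset_pmf Pr m ns \<pi>) (U_bal m ns \<pi> \<delta> \<pi>b)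
         \<le> measure_pmf.variance (log_dataset_pmf Pr m ns \<pi>) (U_naive m ns \<pi> \<delta> \<pi>b)"
proof -
  define N where "N = real (total_n m ns)"
  define w where "w z = pmf Pr (fst z)" for z :: "'x \<times> 'y"
  define p where "p i z = pmf (\<pi> i (fst z)) (snd z)" for i and z :: "'x \<times> 'y"
  define c where "c z = \<delta> (fst z) (snd z) * pmf (\<pi>b (fst z)) (snd z)" for z :: "'x \<times> 'y"
  define pavg where "pavg z = pi_avg m ns \<pi> (fst z) (snd z)" for z :: "'x \<times> 'y"
  have sample: "pmf (sample_pmf Pr (\<pi> i)) = (\<lambda>z. w z * p i z)" for i
    by (simp add: fun_eq_iff pmf_sample_pmf w_def p_def)
  have variance_estimator: "measure_pmf.variance (log_dataset_pmf Pr m ns \<pi>)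
        (\<lambda>D. (1 / N) * (\<Sum>i<m. \<Sum>j<ns i. g i (D (i, j))))
      = (1 / N)\<^sup>2 * (\<Sum>i<m. real (ns i) * weighted_variance (\<lambda>z. w z * p i z) (g i))" for g
    unfolding variance_pmf_scale by (simp add: variance_log_dataset_pmf variance_pmf_finite sample)
  have naive: "U_naive m ns \<pi> \<delta> \<pi>b = (\<lambda>D. (1 / N) * (\<Sum>i<m. \<Sum>j<ns i. c (D (i, j)) / p i (D (i, j))))"
    by (simp add: fun_eq_iff U_naive_def N_def c_def p_def Let_def split_beta)
  have balanced: "U_bal m ns \<pi> \<delta> \<pi>b = (\<lambda>D. (1 / N) * (\<Sum>i<m. \<Sum>j<ns i. c (D (i, j)) / pavg (D (i, j))))"
    by (simp add: fun_eq_iff U_bal_def N_def c_def pavg_def Let_def split_beta)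
  have pavg: "pavg z = (\<Sum>i<m. real (ns i) * p i z) / (\<Sum>i<m. real (ns i))" for z
    by (simp add: pavg_def pi_avg_def total_n_def p_def)
  have supp: "0 < p i z" if "i \<in> {..<m}" "c z \<noteq> 0" for i z
    using assms that by (auto simp: has_support_def c_def p_def)
  have "(\<Sum>i<m. real (ns i) * weighted_variance (\<lambda>z. w z * p i z) (\<lambda>z. c z / pavg z))
      \<le> (\<Sum>i<m. real (ns i) * weighted_variance (\<lambda>z. w z * p i z) (\<lambda>z. c z / p i z))"
    by (rule balanced_importance_variance_le[OF _ _ supp pavg]) (simp_all add: w_def)
  then show ?thesis
    using variance_estimator[of "\<lambda>i z. c z / pavg z"] variance_estimator[of "\<lambda>i z. c z / p i z"]
    unfolding naive balanced by (simp add: mult_left_mono)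
qed

end
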